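(* Let $A$ be a $\mathbb{U}$-poset, $r,s\in\mathbb{I}$, $u,v\in\mathbb{U}$, $a,b,c\in A$. Then: (a) if $r\le s$ and $a\le_r b$ then $a\le_s b$; (b) $a\le_0 b$ iff $a\le b$; (c) if $a\le_r b$ and $b\le_s c$ then $a\le_{r\dotplus s}c$; (d) $\rho(a,a)=0$ and $\rho(a,b)+\rho(b,c)\ge\rho(a,c)$, so $\rho$ is a pseudoquasimetric and $\mathrm{dist}$ is a pseudometric; (e) if $u(t\dotplus r)\le v(t)\dotplus s$ for all $t\in\mathbb{I}$ and $a\le_r b$, then $u(a)\le_s v(b)$; consequently $\rho(u(a),v(a))\le\bigvee_{t\in\mathbb{I}}(u(t)\dotminus v(t))$, and if $\mu:\mathbb{I}\to\mathbb{I}$ satisfies $u(t)\dotminus u(t')\le\mu(t\dotminus t')$ for all $t,t'\in\mathbb{I}$, then $\rho(u(a),u(b))\le\mu(\rho(a,b))$ for all $a,b\in A$; (f) if $u^\times(t\dotplus r)\le v(t)\dotplus s$ for all $t\in\mathbb{I}$, where $u^\times$ is the right adjoint of $u$, and $u(a)\le_r b$, then $a\le_s v(b)$. Moreover, if $A$ is a $\mathbb{U}$-$\Psi^{\mathrm{op}}$-inflattice, then (g) for every upper subset $\psi\subseteq A$ with $\psi^{\mathrm{op}}\in\Psi$ (so $\bigwedge\psi$ exists): $a\le_r\bigwedge\psi$ iff $a\le_r b$ for all $b\in\psi$; consequently for two such $\psi,\psi'$, $\rho(\bigwedge\psi,\bigwedge\psi')\le\bigwedge_{a\in\psi}\bigv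ee_{b\in\psi'}\rho(a,b)$.
   Context: $\mathbb{I}=[0,1]$; $\dotplus,\dotminus$ are truncated addition and subtraction on $\mathbb{I}$. $\mathbb{U}$ is the monoid of surjective monotone maps $\mathbb{I}\to\mathbb{I}$; for $u\in\mathbb{U}$, $u^\times(y)=\max\{x\mid u(x)\le y\}$ is its right adjoint. A $\mathbb{U}$-poset is a poset with a $\mathbb{U}$-action monotone in both variables. $a\le_r b$ iff for all $u,v\in\mathbb{U}$ with $u(t\dotplus r)\le v(t)$ for all $t$, $u(a)\le v(b)$; $\rho(a,b)=\bigwedge\{r\mid a\le_r b\}$; $\mathrm{dist}(a,b)=\rho(a,b)\vee\rho(b,a)$. Standing assumption: $\Phi,\Psi$ are join doctrines (classes of posets containing the one-element poset, closed under unions $\bigcup\mathcal{S}$ of sets $\mathcal{S}$ of subposets in the class with $\mathcal{S}$ (by inclusion) in the class, under codomains of monotone maps with cofinal image, and under cofinal subposets), $\omega\in\Phi$, and $\Phi$ is sound dual to $\Psi^{\mathrm{op}}$: for all posets $X,Y$, lower sets $\phi\subseteq Y$ in $\Phi$, lower sets $\psi\subseteq X$ in $\Psi$, and monotone $F:X^{\mathrm{op}}\times Y\to2$, $\bigwedge_{x\in\psi}\bigvee_{y\in\phi}F=\bigvee_{y\in\phi}\bigwedge_{x\in\psi}F$, and for every poset $X$ the lattice of lower sets of $X$ is the closure of the lower sets in $\Psi$ under unions of subfamilies belonging to $\Phi$. A $\Psi^{\mathrm{op}}$-meet is a meet of a subset $S$ with $S^{\mathrm{op}}\in\Psi$; a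 $\mathbb{U}$-$\Psi^{\mathrm{op}}$-inflattice is a $\mathbb{U}$-poset with all $\Psi^{\mathrm{op}}$-meets, each $u$ acting by a $\Psi^{\mathrm{op}}$-meet-preserving map. *)

theory Defs
  imports "HOL-Analysis.Analysis"
begin

definition II :: "real set" where "II = {0..1}"

definition tplus :: "real \<Rightarrow> real \<Rightarrow> real" where "tplus r s = min 1 (r + s)"
definition tminus :: "real \<Rightarrow> real \<Rightarrow> real" where "tminus r s = max 0 (r - s)"

text \<open>Joins and meets in the complete lattice I (empty join = 0, empty meet = 1).\<close>
definition ISup :: "real set \<Rightarrow> real" where "ISup S = Sup (insert 0 S)"
definition IInf :: "real set \<Rightarrow> real" where "IInf S = Inf (insert 1 S)"

text \<open>The monoid U of surjective monotone maps I -> I, represented extensionally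
  (value 0 outside I), so that maps agreeing on I are equal.\<close>
definition UU :: "(real \<Rightarrow> real) set" where
  "UU = {u. mono_on II u \<and> u ` II = II \<and> (\<forall>x. x \<notin> II \<longrightarrow> u x = 0)}"

definition uid :: "real \<Rightarrow> real" where "uid = (\<lambda>x. if x \<in> II then x else 0)"
definition ucomp :: "(real \<Rightarrow> real) \<Rightarrow> (real \<Rightarrow> real) \<Rightarrow> real \<Rightarrow> real" where
  "ucomp u v = (\<lambda>x. if x \<in> II then u (v x) else 0)"

definition uadj :: "(real \<Rightarrow> real) \<Rightarrow> real \<Rightarrow> real" where
  "uadj u y = Sup {x \<in> II. u x \<le> y}"

definition Uposet :: "((real \<Rightarrow> real) \<Rightarrow> 'a::order \<Rightarrow> 'a) \<Rightarrow> bool" where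
  "Uposet act \<longleftrightarrow>
     (\<forall>a. act uid a = a) \<and>
     (\<forall>u\<in>UU. \<forall>v\<in>UU. \<forall>a. act (ucomp u v) a = act u (act v a)) \<and>
     (\<forall>u\<in>UU. \<forall>v\<in>UU. \<forall>a b. (\<forall>t\<in>II. u t \<le> v t) \<and> a \<le> b \<longrightarrow> act u a \<le> act v b)"

definition le_r :: "((real \<Rightarrow> real) \<Rightarrow> 'a::order \<Rightarrow> 'a) \<Rightarrow> real \<Rightarrow> 'a \<Rightarrow> 'a \<Rightarrow> bool" where
  "le_r act r a b \<longleftrightarrow>
     (\<forall>u\<in>UU. \<forall>v\<in>UU. (\<forall>t\<in>II. u (tplus t r) \<le> v t) \<longrightarrow> act u a \<le> act v b)"

definition rho :: "((real \<Rightarrow> real) \<Rightarrow> 'a::order \<Rightarrow> 'a) \<Rightarrow> 'a \<Rightarrow> 'a \<Rightarrow> real" where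
  "rho act a b = IInf {r \<in> II. le_r act r a b}"

definition udist :: "((real \<Rightarrow> real) \<Rightarrow> 'a::order \<Rightarrow> 'a) \<Rightarrow> 'a \<Rightarrow> 'a \<Rightarrow> real" where
  "udist act a b = max (rho act a b) (rho act b a)"

definition is_meet :: "'a::order set \<Rightarrow> 'a \<Rightarrow> bool" where
  "is_meet S m \<longleftrightarrow> (\<forall>x\<in>S. m \<le> x) \<and> (\<forall>y. (\<forall>x\<in>S. y \<le> x) \<longrightarrow> y \<le> m)"

definition meet :: "'a::order set \<Rightarrow> 'a" where "meet S = (THE m. is_meet S m)"

definition upper_set :: "'a::order set \<Rightarrow> bool" where
  "upper_set S \<longleftrightarrow> (\<forall>x\<in>S. \<forall>y. x \<le> y \<longrightarrow> y \<in> S)"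

text \<open>PsiOp S means: the subposet S^op belongs to the class Psi.
  A U-Psi^op-inflattice: all Psi^op-meets exist and each u preserves them.\<close>
definition U_inflattice :: "('a::order set \<Rightarrow> bool) \<Rightarrow> ((real \<Rightarrow> real) \<Rightarrow> 'a \<Rightarrow> 'a) \<Rightarrow> bool" where
  "U_inflattice PsiOp act \<longleftrightarrow> Uposet act \<and>
     (\<forall>S. PsiOp S \<longrightarrow> (\<exists>m. is_meet S m)) \<and>
     (\<forall>u\<in>UU. \<forall>S m. PsiOp S \<and> is_meet S m \<longrightarrow> is_meet (act u ` S) (act u m))"

end

theory Submission
  imports Defs
begin

(* Everything is a manipulation of the test pairs (u, v) that define a \<le>_r b. Transitivity and
  the adjunction property rest on one construction: if w \<in> U takes the value 1 at 1 - c, then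
  x \<mapsto> w (x -. c) is again in U, and a test pair for r +. s factors through such a shift into a
  test pair for r followed by one for s. Acting by u and v composes test pairs with u and v.
  Since rho is an infimum, its properties follow from those of \<le>_r by approximation from above;
  the modulus bound also uses that monotone surjections of I are uniformly continuous. *)

lemma tplus_mem_II: "x \<in> II \<Longrightarrow> c \<in> II \<Longrightarrow> tplus x c \<in> II"
  by (auto simp: tplus_def II_def)

lemma tminus_mem_II: "x \<in> II \<Longrightarrow> c \<in> II \<Longrightarrow> tminus x c \<in> II"
  by (auto simp: tminus_def II_def)

lemma bdd_above_II: "S \<subseteq> II \<Longrightarrow> bdd_above S"
  by (auto simp: bdd_above_def II_def intro!: exI[of _ 1])

lemma bdd_below_II: "S \<subseteq> II \<Longrightarrow> bdd_below S"
  by (auto simp: bdd_below_def II_def intro!: exI[of _ 0])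

lemma ISup_upper: "S \<subseteq> II \<Longrightarrow> x \<in> S \<Longrightarrow> x \<le> ISup S"
  unfolding ISup_def by (rule cSup_upper) (auto intro!: bdd_above_II simp: II_def)

lemma ISup_mem_II: "S \<subseteq> II \<Longrightarrow> ISup S \<in> II"
  unfolding ISup_def by (auto intro!: cSup_upper cSup_least bdd_above_II simp: II_def)

lemma IInf_lower: "S \<subseteq> II \<Longrightarrow> x \<in> S \<Longrightarrow> IInf S \<le> x"
  unfolding IInf_def by (rule cInf_lower) (auto intro!: bdd_below_II simp: II_def)

lemma IInf_greatest: "(\<And>x. x \<in> S \<Longrightarrow> y \<le> x) \<Longrightarrow> y \<le> 1 \<Longrightarrow> y \<le> IInf S"
  unfolding IInf_def by (rule cInf_greatest) auto

lemma IInf_mem_II: "S \<subseteq> II \<Longrightarrow> IInf S \<in> II"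
  unfolding IInf_def by (auto intro!: cInf_lower cInf_greatest bdd_below_II simp: II_def)

lemma IInf_lessE:
  assumes "S \<subseteq> II" "IInf S < s" "s \<le> 1"
  obtains x where "x \<in> S" "x < s"
proof -
  have "\<exists>x\<in>insert 1 S. x < s"
    using assms(2) unfolding IInf_def
    by (subst cInf_less_iff[symmetric]) (use assms(1) in \<open>auto intro!: bdd_below_II simp: II_def\<close>)
  then show ?thesis using assms(3) that by auto
qed

subsection \<open>The monoid U\<close>

lemma UU_monoD: "u \<in> UU \<Longrightarrow> x \<in> II \<Longrightarrow> y \<in> II \<Longrightarrow> x \<le> y \<Longrightarrow> u x \<le> u y"
  by (auto simp: UU_def mono_on_def)

lemma UU_mem_II: "u \<in> UU \<Longrightarrow> x \<in> II \<Longrightarrow> u x \<in> II"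
  by (auto simp: UU_def)

lemma UU_surjD: "u \<in> UU \<Longrightarrow> y \<in> II \<Longrightarrow> \<exists>x\<in>II. u x = y"
  unfolding UU_def by (metis (mono_tags, lifting) imageE mem_Collect_eq)

lemma UU_zero: assumes u: "u \<in> UU" shows "u 0 = 0"
proof -
  obtain x where x: "x \<in> II" "u x = 0" using UU_surjD[OF u, of 0] by (auto simp: II_def)
  have "u 0 \<le> u x" using x by (intro UU_monoD[OF u]) (auto simp: II_def)
  then show ?thesis using x UU_mem_II[OF u, of 0] by (auto simp: II_def)
qed

lemma UU_one: assumes u: "u \<in> UU" shows "u 1 = 1"
proof -
  obtain x where x: "x \<in> II" "u x = 1" using UU_surjD[OF u, of 1] by (auto simp: II_def)
  have "u x \<le> u 1" using x by (intro UU_monoD[OF u]) (auto simp: II_def)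
  then show ?thesis using x UU_mem_II[OF u, of 1] by (auto simp: II_def)
qed

lemma UU_eq_one: "u \<in> UU \<Longrightarrow> x \<in> II \<Longrightarrow> 1 \<le> u x \<Longrightarrow> u x = 1"
  using UU_mem_II by (force simp: II_def)

lemma uid_UU: "uid \<in> UU"
  by (auto simp: UU_def uid_def mono_on_def image_def)

lemma ucomp_UU:
  assumes u: "u \<in> UU" and v: "v \<in> UU"
  shows "ucomp u v \<in> UU"
proof -
  have "ucomp u v ` II = u ` (v ` II)" by (auto simp: ucomp_def image_def)
  also have "\<dots> = II" using u v by (simp add: UU_def)
  finally show ?thesis
    by (auto simp: UU_def ucomp_def mono_on_def intro!: UU_monoD[OF u] UU_monoD[OF v] UU_mem_II[OF v])
qed

definition ushift :: "real \<Rightarrow> (real \<Rightarrow> real) \<Rightarrow> real \<Rightarrow> real" where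
  "ushift c w = (\<lambda>x. if x \<in> II then w (tminus x c) else 0)"

lemma ushift_UU:
  assumes w: "w \<in> UU" and c: "c \<in> II" and w1: "w (1 - c) = 1"
  shows "ushift c w \<in> UU"
proof -
  have mono: "mono_on II (ushift c w)"
    unfolding mono_on_def ushift_def
    by (auto intro!: UU_monoD[OF w] tminus_mem_II c) (auto simp: tminus_def)
  have "II \<subseteq> ushift c w ` II"
  proof
    fix y assume y: "y \<in> II"
    obtain x where x: "x \<in> II" "w x = y" using UU_surjD[OF w y] by auto
    show "y \<in> ushift c w ` II"
    proof (cases "x \<le> 1 - c")
      case True
      then have "x + c \<in> II" "tminus (x + c) c = x" using x c by (auto simp: II_def tminus_def)
      then show ?thesis using x by (force simp: ushift_def image_def)
    next
      case False
      then have "w (1 - c) \<le> w x" using x c by (intro UU_monoD[OF w]) (auto simp: II_def)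
      then have "y = 1" using w1 x y by (auto simp: II_def)
      moreover have "(1::real) \<in> II" "tminus 1 c = 1 - c" using c by (auto simp: II_def tminus_def)
      ultimately show ?thesis using w1 by (force simp: ushift_def image_def)
    qed
  qed
  moreover have "ushift c w ` II \<subseteq> II"
    by (auto simp: ushift_def intro!: UU_mem_II[OF w] tminus_mem_II c)
  ultimately show ?thesis using mono by (auto simp: UU_def ushift_def)
qed

lemma ushift_tplus_le:
  assumes w: "w \<in> UU" and c: "c \<in> II" and t: "t \<in> II"
  shows "ushift c w (tplus t c) \<le> w t"
proof -
  have "w (tminus (tplus t c) c) \<le> w t"
    using t c by (intro UU_monoD[OF w] tminus_mem_II tplus_mem_II) (auto simp: tplus_def tminus_def II_def)
  then show ?thesis using tplus_mem_II[OF t c] by (simp add: ushift_def)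
qed

lemma UU_continuous_on:
  assumes u: "u \<in> UU"
  shows "continuous_on II u"
proof -
  define g where "g x = (if x \<in> II then u x else x)" for x
  have "continuous_on UNIV g"
  proof (rule continuous_onI_mono)
    have "y \<in> range g" for y
    proof (cases "y \<in> II")
      case True
      then obtain x where "x \<in> II" "u x = y" using UU_surjD[OF u] by blast
      then show ?thesis by (metis g_def rangeI)
    next
      case False
      then show ?thesis by (metis g_def rangeI)
    qed
    then show "open (range g)" by (metis UNIV_eq_I open_UNIV)
    show "g x \<le> g y" if "x \<le> y" for x y
      using that UU_monoD[OF u, of x y] UU_mem_II[OF u, of x] UU_mem_II[OF u, of y]
      by (auto simp: g_def II_def)
  qed
  then show ?thesis
    by (rule continuous_on_eq[OF continuous_on_subset]) (auto simp: g_def)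
qed

lemma UU_uniformly_continuous:
  assumes u: "u \<in> UU" and e: "e > 0"
  obtains d where "d > 0" "\<And>x y. x \<in> II \<Longrightarrow> y \<in> II \<Longrightarrow> \<bar>x - y\<bar> < d \<Longrightarrow> \<bar>u x - u y\<bar> < e"
proof -
  have "uniformly_continuous_on II u"
    using UU_continuous_on[OF u] by (intro compact_uniformly_continuous) (auto simp: II_def)
  then show ?thesis using e that unfolding uniformly_continuous_on_def dist_real_def by metis
qed

lemma uadj_upper: "x \<in> II \<Longrightarrow> u x \<le> y \<Longrightarrow> x \<le> uadj u y"
  unfolding uadj_def by (rule cSup_upper) (auto intro!: bdd_above_II)

lemma uadj_mono:
  assumes u: "u \<in> UU" and y: "0 \<le> y" and yy': "y \<le> y'"
  shows "uadj u y \<le> uadj u y'"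
  unfolding uadj_def
proof (rule cSup_subset_mono)
  show "{x \<in> II. u x \<le> y} \<noteq> {}" using UU_zero[OF u] y by (auto simp: II_def intro!: exI[of _ 0])
qed (use yy' in \<open>auto intro!: bdd_above_II\<close>)

lemma uadj_one: assumes u: "u \<in> UU" shows "uadj u 1 = 1"
proof -
  have "uadj u 1 \<le> 1"
    unfolding uadj_def by (rule cSup_least) (auto simp: II_def UU_zero[OF u] intro!: exI[of _ 0])
  moreover have "1 \<le> uadj u 1" by (rule uadj_upper) (auto simp: II_def UU_one[OF u])
  ultimately show ?thesis by simp
qed

subsection \<open>The relations \<le>_r\<close>

lemma Uposet_uid: "Uposet act \<Longrightarrow> act uid a = a"
  by (simp add: Uposet_def)

lemma Uposet_ucomp: "Uposet act \<Longrightarrow> u \<in> UU \<Longrightarrow> v \<in> UU \<Longrightarrow> act (ucomp u v) a = act u (act v a)"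
  by (simp add: Uposet_def)

lemma Uposet_monoD:
  "Uposet act \<Longrightarrow> u \<in> UU \<Longrightarrow> v \<in> UU \<Longrightarrow> (\<And>t. t \<in> II \<Longrightarrow> u t \<le> v t) \<Longrightarrow> a \<le> b
    \<Longrightarrow> act u a \<le> act v b"
  unfolding Uposet_def by blast

lemma le_rI:
  "(\<And>u v. u \<in> UU \<Longrightarrow> v \<in> UU \<Longrightarrow> (\<And>t. t \<in> II \<Longrightarrow> u (tplus t r) \<le> v t) \<Longrightarrow> act u a \<le> act v b)
    \<Longrightarrow> le_r act r a b"
  unfolding le_r_def by blast

lemma le_rD:
  "le_r act r a b \<Longrightarrow> u \<in> UU \<Longrightarrow> v \<in> UU \<Longrightarrow> (\<And>t. t \<in> II \<Longrightarrow> u (tplus t r) \<le> v t)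
    \<Longrightarrow> act u a \<le> act v b"
  unfolding le_r_def by blast

lemma le_r_mono:
  assumes r: "r \<in> II" and s: "s \<in> II" and "r \<le> s" and ab: "le_r act r a b"
  shows "le_r act s a b"
proof (rule le_rI)
  fix u v assume u: "u \<in> UU" and v: "v \<in> UU" and uv: "\<And>t. t \<in> II \<Longrightarrow> u (tplus t s) \<le> v t"
  show "act u a \<le> act v b"
  proof (rule le_rD[OF ab u v])
    fix t assume t: "t \<in> II"
    have "u (tplus t r) \<le> u (tplus t s)"
      using \<open>r \<le> s\<close> by (intro UU_monoD[OF u] tplus_mem_II t r s) (auto simp: tplus_def)
    also have "\<dots> \<le> v t" using uv[OF t] .
    finally show "u (tplus t r) \<le> v t" .
  qed
qed

lemma le_r_zero_iff:
  assumes U: "Uposet act"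
  shows "le_r act 0 a b \<longleftrightarrow> a \<le> b"
proof
  assume "le_r act 0 a b"
  then have "act uid a \<le> act uid b"
    by (rule le_rD[OF _ uid_UU uid_UU]) (auto simp: uid_def tplus_def II_def)
  then show "a \<le> b" using U by (simp add: Uposet_uid)
next
  assume "a \<le> b"
  then show "le_r act 0 a b"
    by (intro le_rI Uposet_monoD[OF U]) (auto simp: tplus_def II_def)
qed

lemma le_r_trans:
  assumes U: "Uposet act" and r: "r \<in> II" and s: "s \<in> II"
    and ab: "le_r act r a b" and bc: "le_r act s b c"
  shows "le_r act (tplus r s) a c"
proof (rule le_rI)
  fix u v assume u: "u \<in> UU" and v: "v \<in> UU"
    and uv: "\<And>t. t \<in> II \<Longrightarrow> u (tplus t (tplus r s)) \<le> v t"
  have s': "1 - s \<in> II" using s by (simp add: II_def)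
  have "1 \<le> v (1 - s)"
    using uv[OF s'] r s by (simp add: UU_one[OF u] tplus_def II_def)
  then have "v (1 - s) = 1" by (rule UU_eq_one[OF v s'])
  then have w: "ushift s v \<in> UU" by (rule ushift_UU[OF v s])
  have "act u a \<le> act (ushift s v) b"
  proof (rule le_rD[OF ab u w])
    fix t assume t: "t \<in> II"
    have t': "tminus t s \<in> II" using t s by (rule tminus_mem_II)
    have "u (tplus t r) \<le> u (tplus (tminus t s) (tplus r s))"
      using t s r t' by (intro UU_monoD[OF u] tplus_mem_II) (auto simp: tplus_def tminus_def II_def)
    also have "\<dots> \<le> v (tminus t s)" using uv[OF t'] .
    finally show "u (tplus t r) \<le> ushift s v t" using t by (simp add: ushift_def)
  qed
  also have "act (ushift s v) b \<le> act v c"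
    using le_rD[OF bc w v] ushift_tplus_le[OF v s] by blast
  finally show "act u a \<le> act v c" .
qed

lemma le_le_r_trans:
  assumes "Uposet act" "r \<in> II" "a \<le> b" "le_r act r b c"
  shows "le_r act r a c"
  using le_r_trans[of act 0 r a b c] assms by (simp add: le_r_zero_iff tplus_def II_def)

lemma le_r_le_trans:
  assumes "Uposet act" "r \<in> II" "le_r act r a b" "b \<le> c"
  shows "le_r act r a c"
  using le_r_trans[of act r 0 a b c] assms by (simp add: le_r_zero_iff tplus_def II_def)

lemma le_r_act:
  assumes U: "Uposet act" and u: "u \<in> UU" and v: "v \<in> UU" and r: "r \<in> II" and s: "s \<in> II"
    and uv: "\<forall>t\<in>II. u (tplus t r) \<le> tplus (v t) s" and ab: "le_r act r a b"
  shows "le_r act s (act u a) (act v b)"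
proof (rule le_rI)
  fix u' v' assume u': "u' \<in> UU" and v': "v' \<in> UU"
    and uv': "\<And>t. t \<in> II \<Longrightarrow> u' (tplus t s) \<le> v' t"
  have "act (ucomp u' u) a \<le> act (ucomp v' v) b"
  proof (rule le_rD[OF ab ucomp_UU[OF u' u] ucomp_UU[OF v' v]])
    fix t assume t: "t \<in> II"
    have tr: "tplus t r \<in> II" using t r by (rule tplus_mem_II)
    have vt: "v t \<in> II" using v t by (rule UU_mem_II)
    have "u' (u (tplus t r)) \<le> u' (tplus (v t) s)"
      using uv t by (intro UU_monoD[OF u'] UU_mem_II[OF u] tr tplus_mem_II vt s) auto
    also have "\<dots> \<le> v' (v t)" using uv'[OF vt] .
    finally show "ucomp u' u (tplus t r) \<le> ucomp v' v t" using t tr by (simp add: ucomp_def)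
  qed
  then show "act u' (act u a) \<le> act v' (act v b)" using Uposet_ucomp[OF U] u v u' v' by simp
qed

lemma le_r_uadj:
  assumes U: "Uposet act" and u: "u \<in> UU" and v: "v \<in> UU" and r: "r \<in> II" and s: "s \<in> II"
    and uv: "\<forall>t\<in>II. uadj u (tplus t r) \<le> tplus (v t) s" and L: "le_r act r (act u a) b"
  shows "le_r act s a (act v b)"
proof (rule le_rI)
  fix u' v' assume u': "u' \<in> UU" and v': "v' \<in> UU"
    and uv': "\<And>t. t \<in> II \<Longrightarrow> u' (tplus t s) \<le> v' t"
  define V where "V = ucomp v' v"
  have V: "V \<in> UU" unfolding V_def by (rule ucomp_UU[OF v' v])
  have u'_le_V: "u' x \<le> V t" if x: "x \<in> II" and t: "t \<in> II" and xt: "x \<le> uadj u (tplus t r)" for x t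
  proof -
    have vt: "v t \<in> II" using UU_mem_II[OF v t] .
    have "u' x \<le> u' (tplus (v t) s)"
      using xt uv t x by (intro UU_monoD[OF u'] tplus_mem_II vt s) auto
    also have "\<dots> \<le> v' (v t)" using uv'[OF vt] .
    finally show ?thesis using t by (simp add: V_def ucomp_def)
  qed
  have r': "1 - r \<in> II" using r by (simp add: II_def)
  have "1 \<le> V (1 - r)"
    using u'_le_V[OF _ r', of 1] r by (simp add: uadj_one[OF u] UU_one[OF u'] tplus_def II_def)
  then have "V (1 - r) = 1" by (rule UU_eq_one[OF V r'])
  then have W: "ushift r V \<in> UU" by (rule ushift_UU[OF V r])
  have "act u' a \<le> act (ucomp (ushift r V) u) a"
  proof (rule Uposet_monoD[OF U u' ucomp_UU[OF W u]])
    fix x assume x: "x \<in> II"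
    have ux: "u x \<in> II" using UU_mem_II[OF u x] .
    have t: "tminus (u x) r \<in> II" using ux r by (rule tminus_mem_II)
    have "x \<le> uadj u (u x)" using uadj_upper[OF x] by simp
    also have "\<dots> \<le> uadj u (tplus (tminus (u x) r) r)"
      using ux r by (intro uadj_mono[OF u]) (auto simp: tplus_def tminus_def II_def)
    finally have "u' x \<le> V (tminus (u x) r)" using u'_le_V[OF x t] by blast
    then show "u' x \<le> ucomp (ushift r V) u x" using x ux by (simp add: ucomp_def ushift_def)
  qed simp
  also have "\<dots> = act (ushift r V) (act u a)" using Uposet_ucomp[OF U W u] .
  also have "\<dots> \<le> act V b" using le_rD[OF L W V] ushift_tplus_le[OF V r] by blast
  also have "\<dots> = act v' (act v b)" unfolding V_def using Uposet_ucomp[OF U v' v] .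
  finally show "act u' a \<le> act v' (act v b)" .
qed

lemma meet_eqI: "is_meet S m \<Longrightarrow> meet S = m"
  unfolding meet_def by (rule the_equality) (auto simp: is_meet_def intro: order.antisym)

lemma le_r_meet_iff:
  assumes I: "U_inflattice PsiOp act" and P: "PsiOp \<psi>" and r: "r \<in> II"
  shows "le_r act r a (meet \<psi>) \<longleftrightarrow> (\<forall>b\<in>\<psi>. le_r act r a b)"
proof -
  have U: "Uposet act" using I by (simp add: U_inflattice_def)
  obtain m where m: "is_meet \<psi> m" using I P by (auto simp: U_inflattice_def)
  show ?thesis unfolding meet_eqI[OF m]
  proof
    assume "le_r act r a m"
    then show "\<forall>b\<in>\<psi>. le_r act r a b"
      using m le_r_le_trans[OF U r] by (auto simp: is_meet_def)
  next
    assume R: "\<forall>b\<in>\<psi>. le_r act r a b"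
    show "le_r act r a m"
    proof (rule le_rI)
      fix u v assume u: "u \<in> UU" and v: "v \<in> UU" and uv: "\<And>t. t \<in> II \<Longrightarrow> u (tplus t r) \<le> v t"
      have "is_meet (act v ` \<psi>) (act v m)" using I P m v by (auto simp: U_inflattice_def)
      moreover have "\<forall>x\<in>act v ` \<psi>. act u a \<le> x" using R le_rD[OF _ u v uv] by blast
      ultimately show "act u a \<le> act v m" by (simp add: is_meet_def)
    qed
  qed
qed

subsection \<open>The pseudoquasimetric rho\<close>

lemma rho_mem_II: "rho act a b \<in> II"
  unfolding rho_def by (rule IInf_mem_II) blast

lemma rho_le_if_le_r: "s \<in> II \<Longrightarrow> le_r act s a b \<Longrightarrow> rho act a b \<le> s"
  unfolding rho_def by (rule IInf_lower) auto

lemma le_r_if_rho_less: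
  assumes "rho act a b < s" "s \<le> 1"
  shows "le_r act s a b"
proof -
  obtain r where "r \<in> II" "le_r act r a b" "r < s"
    using IInf_lessE[of "{r \<in> II. le_r act r a b}" s] assms unfolding rho_def by blast
  then show ?thesis using le_r_mono[of r s] assms rho_mem_II[of act a b] by (auto simp: II_def)
qed

lemma rho_leI:
  assumes x: "0 \<le> x" and le: "\<And>s. x < s \<Longrightarrow> s \<le> 1 \<Longrightarrow> le_r act s a b"
  shows "rho act a b \<le> x"
proof (cases "x < 1")
  case True
  show ?thesis
  proof (rule dense_ge_bounded[OF True])
    fix s assume "x < s" "s < 1"
    then show "rho act a b \<le> s" using x le by (intro rho_le_if_le_r) (auto simp: II_def)
  qed
next
  case False
  then show ?thesis using rho_mem_II[of act a b] by (auto simp: II_def)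
qed

lemma rho_self: "Uposet act \<Longrightarrow> rho act a a = 0"
  using rho_le_if_le_r[of 0 act a a] rho_mem_II[of act a a] by (auto simp: le_r_zero_iff II_def)

lemma rho_triangle:
  assumes U: "Uposet act"
  shows "rho act a c \<le> rho act a b + rho act b c"
proof -
  define p q where "p = rho act a b" and "q = rho act b c"
  have pq: "0 \<le> p" "0 \<le> q"
    using rho_mem_II[of act a b] rho_mem_II[of act b c] by (simp_all add: p_def q_def II_def)
  have "rho act a c \<le> p + q"
  proof (rule rho_leI)
    show "0 \<le> p + q" using pq by simp
    fix s assume s: "p + q < s" "s \<le> 1"
    define e where "e = (s - p - q) / 2"
    have e: "p < p + e" "q < q + e" "p + e \<in> II" "q + e \<in> II"
      using s pq by (simp_all add: e_def II_def field_simps)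
    have "le_r act (p + e) a b" "le_r act (q + e) b c"
      using e s unfolding p_def q_def by (auto intro!: le_r_if_rho_less simp: II_def)
    then have "le_r act (tplus (p + e) (q + e)) a c" using e by (intro le_r_trans[OF U])
    moreover have "tplus (p + e) (q + e) = s" using s by (simp add: tplus_def e_def)
    ultimately show "le_r act s a c" by simp
  qed
  then show ?thesis by (simp add: p_def q_def)
qed

lemma udist_self: "Uposet act \<Longrightarrow> udist act a a = 0"
  by (simp add: udist_def rho_self)

lemma udist_commute: "udist act a b = udist act b a"
  by (simp add: udist_def max.commute)

lemma udist_triangle:
  assumes "Uposet act"
  shows "udist act a c \<le> udist act a b + udist act b c"
  using rho_triangle[OF assms, of a c b] rho_triangle[OF assms, of c a b]
  by (auto simp: udist_def)

lemma rho_act_le_ISup: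
  assumes U: "Uposet act" and u: "u \<in> UU" and v: "v \<in> UU"
  shows "rho act (act u a) (act v a) \<le> ISup ((\<lambda>t. tminus (u t) (v t)) ` II)"
    (is "_ \<le> ISup ?D")
proof (rule rho_le_if_le_r)
  have D: "?D \<subseteq> II" using UU_mem_II[OF u] UU_mem_II[OF v] by (force simp: II_def tminus_def)
  then show m: "ISup ?D \<in> II" by (rule ISup_mem_II)
  show "le_r act (ISup ?D) (act u a) (act v a)"
  proof (rule le_r_act[OF U u v _ m, where r = 0])
    show "\<forall>t\<in>II. u (tplus t 0) \<le> tplus (v t) (ISup ?D)"
    proof
      fix t assume t: "t \<in> II"
      have "tminus (u t) (v t) \<le> ISup ?D" using ISup_upper[OF D imageI[OF t]] .
      then show "u (tplus t 0) \<le> tplus (v t) (ISup ?D)"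
        using UU_mem_II[OF u t] t by (auto simp: tplus_def tminus_def II_def)
    qed
  qed (auto simp: le_r_zero_iff[OF U] II_def)
qed

lemma UU_tplus_bound_from_modulus:
  assumes u: "u \<in> UU" and \<mu>: "\<forall>t\<in>II. \<forall>t'\<in>II. tminus (u t) (u t') \<le> \<mu> (tminus t t')"
    and p: "p \<in> II" and s: "\<mu> p < s" "s \<le> 1"
  obtains r where "r \<in> II" "p < r" "\<forall>t\<in>II. u (tplus t r) \<le> tplus (u t) s"
proof -
  have "tminus (u 1) (u 0) \<le> \<mu> (tminus 1 0)" using \<mu> by (simp add: II_def)
  then have "1 \<le> \<mu> 1" by (simp add: UU_zero[OF u] UU_one[OF u] tminus_def)
  then have p1: "p < 1" using p s by (cases "p = 1") (auto simp: II_def)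
  obtain d where d: "d > 0" and ucont: "\<And>x y. x \<in> II \<Longrightarrow> y \<in> II \<Longrightarrow> \<bar>x - y\<bar> < d \<Longrightarrow> \<bar>u x - u y\<bar> < s - \<mu> p"
    using UU_uniformly_continuous[OF u] s by (metis diff_gt_0_iff_gt)
  define r where "r = min 1 (p + d / 2)"
  have r: "r \<in> II" "p < r" "r - p < d" using p p1 d by (auto simp: r_def II_def)
  have "u (tplus t r) \<le> tplus (u t) s" if t: "t \<in> II" for t
  proof -
    \<comment> \<open>From t to y the argument moves by less than d, from y to x by exactly p.\<close>
    define x where "x = tplus t r"
    define y where "y = x - p"
    have x: "x \<in> II" unfolding x_def using t r(1) by (rule tplus_mem_II)
    have y: "y \<in> II" using t r p x by (auto simp: y_def x_def tplus_def II_def)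
    have "tminus (u x) (u y) \<le> \<mu> (tminus x y)" using \<mu> x y by blast
    then have "u x - u y \<le> \<mu> p" using p by (simp add: y_def tminus_def II_def)
    moreover have "u y - u t < s - \<mu> p"
    proof (cases "y \<le> t")
      case True
      then show ?thesis using UU_monoD[OF u y t] s by simp
    next
      case False
      then have "\<bar>y - t\<bar> < d" using r by (auto simp: y_def x_def tplus_def)
      then show ?thesis using ucont[OF y t] by simp
    qed
    moreover have "u x \<le> 1" using UU_mem_II[OF u x] by (simp add: II_def)
    ultimately show ?thesis by (simp add: x_def tplus_def)
  qed
  then show ?thesis using that r by blast
qed

lemma rho_act_le_modulus:
  assumes U: "Uposet act" and u: "u \<in> UU" and \<mu>II: "\<mu> ` II \<subseteq> II"
    and \<mu>: "\<forall>t\<in>II. \<forall>t'\<in>II. tminus (u t) (u t') \<le> \<mu> (tminus t t')"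
  shows "rho act (act u a) (act u b) \<le> \<mu> (rho act a b)"
proof (rule rho_leI)
  have \<mu>\<rho>: "\<mu> (rho act a b) \<in> II" using \<mu>II rho_mem_II by blast
  then show "0 \<le> \<mu> (rho act a b)" by (simp add: II_def)
  fix s assume s: "\<mu> (rho act a b) < s" "s \<le> 1"
  obtain r where r: "r \<in> II" "rho act a b < r" and ur: "\<forall>t\<in>II. u (tplus t r) \<le> tplus (u t) s"
    using UU_tplus_bound_from_modulus[OF u \<mu> rho_mem_II s] .
  have "s \<in> II" using s \<mu>\<rho> by (simp add: II_def)
  moreover have "le_r act r a b" using r by (intro le_r_if_rho_less) (auto simp: II_def)
  ultimately show "le_r act s (act u a) (act u b)" by (rule le_r_act[OF U u u r(1) _ ur])
qed

lemma rho_meet_le: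
  assumes I: "U_inflattice PsiOp act" and P: "PsiOp \<psi>" and P': "PsiOp \<psi>'"
  shows "rho act (meet \<psi>) (meet \<psi>') \<le> IInf ((\<lambda>a. ISup ((\<lambda>b. rho act a b) ` \<psi>')) ` \<psi>)"
proof (rule IInf_greatest)
  have U: "Uposet act" using I by (simp add: U_inflattice_def)
  obtain m where m: "is_meet \<psi> m" using I P by (auto simp: U_inflattice_def)
  have D: "(\<lambda>b. rho act a b) ` \<psi>' \<subseteq> II" for a using rho_mem_II by blast
  fix x assume "x \<in> (\<lambda>a. ISup ((\<lambda>b. rho act a b) ` \<psi>')) ` \<psi>"
  then obtain a where a: "a \<in> \<psi>" and x: "x = ISup ((\<lambda>b. rho act a b) ` \<psi>')" by blast
  show "rho act (meet \<psi>) (meet \<psi>') \<le> x"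
  proof (rule rho_leI)
    show "0 \<le> x" using ISup_mem_II[OF D] by (simp add: x II_def)
    fix s assume s: "x < s" "s \<le> 1"
    then have sII: "s \<in> II" using \<open>0 \<le> x\<close> by (simp add: II_def)
    have "le_r act s a b" if b: "b \<in> \<psi>'" for b
      using ISup_upper[OF D[of a] imageI[OF b]] s unfolding x by (intro le_r_if_rho_less) auto
    then have "le_r act s a (meet \<psi>')" using le_r_meet_iff[OF I P' sII] by blast
    moreover have "meet \<psi> \<le> a" using m a by (simp add: meet_eqI is_meet_def)
    ultimately show "le_r act s (meet \<psi>) (meet \<psi>')" using le_le_r_trans[OF U sII] by blast
  qed
qed (use rho_mem_II in \<open>auto simp: II_def\<close>)

theorem lemma4p6:
  fixes act :: "(real \<Rightarrow> real) \<Rightarrow> 'a::order \<Rightarrow> 'a"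
    and PsiOp :: "'a set \<Rightarrow> bool"
  assumes "Uposet act"
  shows
    \<comment> \<open>(a)\<close>
    "(\<forall>r\<in>II. \<forall>s\<in>II. \<forall>a b. r \<le> s \<and> le_r act r a b \<longrightarrow> le_r act s a b)
   \<comment> \<open>(b)\<close>
   \<and> (\<forall>a b. le_r act 0 a b \<longleftrightarrow> a \<le> b)
   \<comment> \<open>(c)\<close>
   \<and> (\<forall>r\<in>II. \<forall>s\<in>II. \<forall>a b c. le_r act r a b \<and> le_r act s b c \<longrightarrow> le_r act (tplus r s) a c)
   \<comment> \<open>(d)\<close>
   \<and> (\<forall>a. rho act a a = 0)
   \<and> (\<forall>a b c. rho act a b + rho act b c \<ge> rho act a c)
   \<and> (\<forall>a. udist act a a = 0)
   \<and> (\<forall>a b. udist act a b = udist act b a)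
   \<and> (\<forall>a b c. udist act a b + udist act b c \<ge> udist act a c)
   \<comment> \<open>(e)\<close>
   \<and> (\<forall>u\<in>UU. \<forall>v\<in>UU. \<forall>r\<in>II. \<forall>s\<in>II. \<forall>a b.
        (\<forall>t\<in>II. u (tplus t r) \<le> tplus (v t) s) \<and> le_r act r a b
        \<longrightarrow> le_r act s (act u a) (act v b))
   \<and> (\<forall>u\<in>UU. \<forall>v\<in>UU. \<forall>a.
        rho act (act u a) (act v a) \<le> ISup ((\<lambda>t. tminus (u t) (v t)) ` II))
   \<and> (\<forall>u\<in>UU. \<forall>\<mu>. \<mu> ` II \<subseteq> II \<and> (\<forall>t\<in>II. \<forall>t'\<in>II. tminus (u t) (u t') \<le> \<mu> (tminus t t'))
        \<longrightarrow> (\<forall>a b. rho act (act u a) (act u b) \<le> \<mu> (rho act a b)))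
   \<comment> \<open>(f)\<close>
   \<and> (\<forall>u\<in>UU. \<forall>v\<in>UU. \<forall>r\<in>II. \<forall>s\<in>II. \<forall>a b.
        (\<forall>t\<in>II. uadj u (tplus t r) \<le> tplus (v t) s) \<and> le_r act r (act u a) b
        \<longrightarrow> le_r act s a (act v b))
   \<comment> \<open>(g)\<close>
   \<and> (U_inflattice PsiOp act \<longrightarrow>
        (\<forall>\<psi>. upper_set \<psi> \<and> PsiOp \<psi> \<longrightarrow>
           (\<forall>r\<in>II. \<forall>a. le_r act r a (meet \<psi>) \<longleftrightarrow> (\<forall>b\<in>\<psi>. le_r act r a b)))
      \<and> (\<forall>\<psi> \<psi>'. upper_set \<psi> \<and> PsiOp \<psi> \<and> upper_set \<psi>' \<and> PsiOp \<psi>' \<longrightarrow>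
           rho act (meet \<psi>) (meet \<psi>') \<le> IInf ((\<lambda>a. ISup ((\<lambda>b. rho act a b) ` \<psi>')) ` \<psi>)))"
  by (intro conjI impI allI ballI; (elim conjE)?;
      rule le_r_mono le_r_zero_iff[OF assms] le_r_trans[OF assms] rho_self[OF assms]
        rho_triangle[OF assms] udist_self[OF assms] udist_commute udist_triangle[OF assms]
        le_r_act[OF assms] rho_act_le_ISup[OF assms] rho_act_le_modulus[OF assms]
        le_r_uadj[OF assms] le_r_meet_iff rho_meet_le;
      assumption)

end
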